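(* Let $(M,J,g)$ be a $(J^2=\pm1)$-metric manifold with $\alpha\varepsilon=-1$. The following are equivalent: (i) $\widetilde N_J^{-1}=0$; (ii) $(\nabla^g_X\Phi)(Y,Z)-\alpha(\nabla^g_{JX}\Phi)(JY,Z)=0$ for all $X,Y,Z$; (iii) $(\nabla^g_XJ)Y-\alpha(\nabla^g_{JX}J)JY=0$ for all $X,Y$; (iv) $(M,J,g)$ is of quasi-Kähler type, i.e. $(\nabla^g_XJ)JY-(\nabla^g_{JX}J)Y=0$ for all $X,Y$; (v) $(\nabla^g_XJ)X-\alpha(\nabla^g_{JX}J)JX=0$ for all $X$.
   Context: A $(J^2=\pm1)$-metric manifold $(M,J,g)$ is a smooth manifold $M$ with a semi-Riemannian metric $g$ and a $(1,1)$-tensor field $J$ such that $J^2=\alpha\,\mathrm{Id}$, $\mathrm{trace}\,J=0$, $g(JX,JY)=\varepsilon g(X,Y)$ for all vector fields, where $\alpha,\varepsilon\in\{-1,1\}$, and $g$ is Riemannian when $\varepsilon=1$. $\nabla^g$ is the Levi-Civita connection; $\Phi(X,Y)=g(JX,Y)$ is the fundamental tensor. The second Nijenhuis tensor is $\widetilde N_J^{\alpha\varepsilon}(X,Y)=(\nabla^g_XJ)JY+\alpha\varepsilon\big((\nabla^g_{JX}J)Y+(\nabla^g_YJ)JX\big)+(\nabla^g_{JY}J)X$; for $\alpha\varepsilon=-1$ it is denoted $\widetilde N_J^{-1}$. *)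

theory Defs
  imports Complex_Main
begin

text \<open>
Algebraic (coordinate-free) model of a semi-Riemannian manifold, as used in
Koszul-style differential geometry:
  'f : the commutative real algebra of smooth functions C^\<infinity>(M);
  'x : the C^\<infinity>(M)-module of smooth vector fields, with scalar multiplication sc;
  der X f : the derivative X(f) of a function along a vector field;
  br X Y : the Lie bracket [X,Y];
  g : the metric (symmetric, C^\<infinity>(M)-bilinear, nondegenerate);
  J : a (1,1)-tensor field, i.e. a C^\<infinity>(M)-linear endomorphism of vector fields;
  nabla X Y : a covariant derivative nabla_X Y.
\<close>

definition Jpm_metric_manifold ::
  "('f::{comm_ring_1,real_algebra_1} \<Rightarrow> 'x::ab_group_add \<Rightarrow> 'x) \<Rightarrow> ('x \<Rightarrow> 'f \<Rightarrow> 'f)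
   \<Rightarrow> ('x \<Rightarrow> 'x \<Rightarrow> 'x) \<Rightarrow> ('x \<Rightarrow> 'x \<Rightarrow> 'f) \<Rightarrow> ('x \<Rightarrow> 'x) \<Rightarrow> real \<Rightarrow> real \<Rightarrow> bool" where
  "Jpm_metric_manifold sc der br g J \<alpha> \<epsilon> \<longleftrightarrow>
     module sc \<and>
     \<comment> \<open>vector fields act on functions as derivations, C^\<infinity>(M)-linearly in the field\<close>
     (\<forall>X f h. der X (f + h) = der X f + der X h) \<and>
     (\<forall>X f h. der X (f * h) = f * der X h + h * der X f) \<and>
     (\<forall>X c. der X (of_real c) = 0) \<and>
     (\<forall>X Y f. der (X + Y) f = der X f + der Y f) \<and>
     (\<forall>a X f. der (sc a X) f = a * der X f) \<and>
     \<comment> \<open>Lie bracket\<close>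
     (\<forall>X Y f. der (br X Y) f = der X (der Y f) - der Y (der X f)) \<and>
     \<comment> \<open>semi-Riemannian metric\<close>
     (\<forall>X Y. g X Y = g Y X) \<and>
     (\<forall>X Y Z. g (X + Y) Z = g X Z + g Y Z) \<and>
     (\<forall>a X Y. g (sc a X) Y = a * g X Y) \<and>
     (\<forall>X. (\<forall>Y. g X Y = 0) \<longrightarrow> X = 0) \<and>
     \<comment> \<open>(1,1)-tensor field J with J^2 = \<alpha> Id and g(JX,JY) = \<epsilon> g(X,Y)\<close>
     (\<forall>X Y. J (X + Y) = J X + J Y) \<and>
     (\<forall>a X. J (sc a X) = sc a (J X)) \<and>
     (\<forall>X. J (J X) = sc (of_real \<alpha>) X) \<and>
     (\<forall>X Y. g (J X) (J Y) = of_real \<epsilon> * g X Y) \<and>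
     (\<alpha> = 1 \<or> \<alpha> = -1) \<and> (\<epsilon> = 1 \<or> \<epsilon> = -1)"

text \<open>nabla is the Levi-Civita connection of g: an affine connection that is
torsion-free and metric (this characterizes it uniquely, by the Koszul formula).\<close>

definition levi_civita ::
  "('f::{comm_ring_1,real_algebra_1} \<Rightarrow> 'x::ab_group_add \<Rightarrow> 'x) \<Rightarrow> ('x \<Rightarrow> 'f \<Rightarrow> 'f)
   \<Rightarrow> ('x \<Rightarrow> 'x \<Rightarrow> 'x) \<Rightarrow> ('x \<Rightarrow> 'x \<Rightarrow> 'f) \<Rightarrow> ('x \<Rightarrow> 'x \<Rightarrow> 'x) \<Rightarrow> bool" where
  "levi_civita sc der br g nabla \<longleftrightarrow>
     (\<forall>X1 X2 Y. nabla (X1 + X2) Y = nabla X1 Y + nabla X2 Y) \<and>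
     (\<forall>a X Y. nabla (sc a X) Y = sc a (nabla X Y)) \<and>
     (\<forall>X Y1 Y2. nabla X (Y1 + Y2) = nabla X Y1 + nabla X Y2) \<and>
     (\<forall>X a Y. nabla X (sc a Y) = sc (der X a) Y + sc a (nabla X Y)) \<and>
     (\<forall>X Y. nabla X Y - nabla Y X = br X Y) \<and>
     (\<forall>X Y Z. der X (g Y Z) = g (nabla X Y) Z + g Y (nabla X Z))"

definition nablaJ :: "('x \<Rightarrow> 'x \<Rightarrow> 'x::ab_group_add) \<Rightarrow> ('x \<Rightarrow> 'x) \<Rightarrow> 'x \<Rightarrow> 'x \<Rightarrow> 'x" where
  "nablaJ nabla J X Y = nabla X (J Y) - J (nabla X Y)"

definition fundPhi :: "('x \<Rightarrow> 'x \<Rightarrow> 'f) \<Rightarrow> ('x \<Rightarrow> 'x) \<Rightarrow> 'x \<Rightarrow> 'x \<Rightarrow> 'f" where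
  "fundPhi g J X Y = g (J X) Y"

definition nablaPhi ::
  "('x \<Rightarrow> 'f::ab_group_add \<Rightarrow> 'f) \<Rightarrow> ('x \<Rightarrow> 'x \<Rightarrow> 'x) \<Rightarrow> ('x \<Rightarrow> 'x \<Rightarrow> 'f) \<Rightarrow> ('x \<Rightarrow> 'x)
   \<Rightarrow> 'x \<Rightarrow> 'x \<Rightarrow> 'x \<Rightarrow> 'f" where
  "nablaPhi der nabla g J X Y Z =
     der X (fundPhi g J Y Z) - fundPhi g J (nabla X Y) Z - fundPhi g J Y (nabla X Z)"

definition second_nijenhuis ::
  "('f::real_algebra_1 \<Rightarrow> 'x::ab_group_add \<Rightarrow> 'x) \<Rightarrow> ('x \<Rightarrow> 'x \<Rightarrow> 'x) \<Rightarrow> ('x \<Rightarrow> 'x) \<Rightarrow> real \<Rightarrow> real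
   \<Rightarrow> 'x \<Rightarrow> 'x \<Rightarrow> 'x" where
  "second_nijenhuis sc nabla J \<alpha> \<epsilon> X Y =
     nablaJ nabla J X (J Y)
     + sc (of_real (\<alpha> * \<epsilon>)) (nablaJ nabla J (J X) Y + nablaJ nabla J Y (J X))
     + nablaJ nabla J (J Y) X"

end

theory Submission
  imports Defs
begin

text \<open>
Everything reduces to the tensor D = qK_defect, D(X,Y) = (\<nabla>_X J)Y - \<alpha>(\<nabla>_{JX} J)JY, which is
condition (iii). Since \<nabla> is metric, (\<nabla>_X \<Phi>)(Y,Z) = g((\<nabla>_X J)Y, Z), so (ii) says
g(D(X,Y), \<cdot>) = 0; (iv) is D(X,JY) = 0; (v) is D(X,X) = 0; and for \<alpha>\<epsilon> = -1 the second
Nijenhuis tensor is J(D(Y,X) - D(X,Y)). Because \<nabla> commutes with multiplication by the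
constant \<alpha>, D satisfies D(JX,Y) = J D(X,Y) and D(X,JY) = -J D(X,Y). These two relations
force a symmetric D to vanish and make a skew-symmetric D symmetric, which gives (i) and
(v); (ii) and (iv) follow from nondegeneracy of g and injectivity of J.
\<close>

lemma module_add_self_eq_0:
  fixes sc :: "'f::{comm_ring_1,real_algebra_1} \<Rightarrow> 'x::ab_group_add \<Rightarrow> 'x" and x :: 'x
  assumes "module sc" and "x + x = 0"
  shows "x = 0"
proof -
  interpret module sc by fact
  have "of_real (1/2) + of_real (1/2) = (1::'f)"
    by (metis of_real_add of_real_1 field_sum_of_halves)
  then have "x = sc (of_real (1/2)) (x + x)"
    by (metis scale_left_distrib scale_one scale_right_distrib)
  with assms(2) show "x = 0" by simp
qed

locale Jpm_levi_civita =
  fixes sc :: "'f::{comm_ring_1,real_algebra_1} \<Rightarrow> 'x::ab_group_add \<Rightarrow> 'x"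
    and der :: "'x \<Rightarrow> 'f \<Rightarrow> 'f" and br :: "'x \<Rightarrow> 'x \<Rightarrow> 'x"
    and g :: "'x \<Rightarrow> 'x \<Rightarrow> 'f" and J :: "'x \<Rightarrow> 'x" and nabla :: "'x \<Rightarrow> 'x \<Rightarrow> 'x"
    and \<alpha> \<epsilon> :: real
  assumes manifold: "Jpm_metric_manifold sc der br g J \<alpha> \<epsilon>"
    and levi_civita: "levi_civita sc der br g nabla"
begin

sublocale module sc
  using manifold by (simp add: Jpm_metric_manifold_def)

lemma alpha_mult_alpha [simp]: "of_real \<alpha> * of_real \<alpha> = (1::'f)"
  using manifold by (auto simp: Jpm_metric_manifold_def)

lemma J_add [simp]: "J (X + Y) = J X + J Y"
  and J_scale [simp]: "J (sc c X) = sc c (J X)"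
  and J_J [simp]: "J (J X) = sc (of_real \<alpha>) X"
  using manifold by (simp_all add: Jpm_metric_manifold_def)

lemma J_zero [simp]: "J 0 = 0"
  using J_add[of 0 0] by simp

lemma J_minus [simp]: "J (- X) = - J X"
  using J_add[of X "- X"] by (simp add: eq_neg_iff_add_eq_0 add.commute)

lemma J_diff [simp]: "J (X - Y) = J X - J Y"
  using J_add[of X "- Y"] by simp

lemma J_eq_0_iff [simp]: "J X = 0 \<longleftrightarrow> X = 0"
proof
  assume "J X = 0"
  then have "sc (of_real \<alpha>) (sc (of_real \<alpha>) X) = 0"
    by (metis J_J J_zero)
  then show "X = 0" by simp
qed simp

lemma J_inject [simp]: "J X = J Y \<longleftrightarrow> X = Y"
  using J_eq_0_iff[of "X - Y"] by simp

lemma add_self_eq_0_iff [simp]: "(X::'x) + X = 0 \<longleftrightarrow> X = 0"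
proof
  show "X + X = 0 \<Longrightarrow> X = 0"
    by (rule module_add_self_eq_0[OF module_axioms])
qed simp

lemma g_add_left [simp]: "g (X + Y) Z = g X Z + g Y Z"
  and g_scale_left [simp]: "g (sc c X) Z = c * g X Z"
  and g_nondegenerate: "(\<forall>Z. g X Z = 0) \<Longrightarrow> X = 0"
  using manifold unfolding Jpm_metric_manifold_def by blast+

lemma g_zero_left [simp]: "g 0 Z = 0"
  using g_add_left[of 0 0 Z] by simp

lemma g_minus_left [simp]: "g (- X) Z = - g X Z"
  using g_add_left[of X "- X" Z] by (simp add: eq_neg_iff_add_eq_0 add.commute)

lemma g_diff_left [simp]: "g (X - Y) Z = g X Z - g Y Z"
  using g_add_left[of X "- Y" Z] by simp

lemma g_eq_0_iff: "(\<forall>Z. g X Z = 0) \<longleftrightarrow> X = 0"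
  using g_nondegenerate by auto

lemma nabla_add_left [simp]: "nabla (X1 + X2) Y = nabla X1 Y + nabla X2 Y"
  and nabla_scale_left [simp]: "nabla (sc c X) Y = sc c (nabla X Y)"
  and nabla_add_right [simp]: "nabla X (Y1 + Y2) = nabla X Y1 + nabla X Y2"
  and nabla_metric: "der X (g Y Z) = g (nabla X Y) Z + g Y (nabla X Z)"
  using levi_civita by (simp_all add: levi_civita_def)

lemma nabla_scale_alpha_right [simp]:
  "nabla X (sc (of_real \<alpha>) Y) = sc (of_real \<alpha>) (nabla X Y)"
  using levi_civita manifold by (simp add: levi_civita_def Jpm_metric_manifold_def)

lemma nablaJ_add_left [simp]: "nablaJ nabla J (X1 + X2) Y = nablaJ nabla J X1 Y + nablaJ nabla J X2 Y"
  by (simp add: nablaJ_def)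

lemma nablaJ_scale_left [simp]: "nablaJ nabla J (sc c X) Y = sc c (nablaJ nabla J X Y)"
  by (simp add: nablaJ_def scale_right_diff_distrib)

lemma nablaJ_add_right [simp]: "nablaJ nabla J X (Y1 + Y2) = nablaJ nabla J X Y1 + nablaJ nabla J X Y2"
  by (simp add: nablaJ_def)

lemma nablaJ_scale_alpha_right [simp]:
  "nablaJ nabla J X (sc (of_real \<alpha>) Y) = sc (of_real \<alpha>) (nablaJ nabla J X Y)"
  by (simp add: nablaJ_def scale_right_diff_distrib)

lemma nablaJ_J_right [simp]: "nablaJ nabla J X (J Y) = - J (nablaJ nabla J X Y)"
  by (simp add: nablaJ_def)

lemma nablaPhi_eq: "nablaPhi der nabla g J X Y Z = g (nablaJ nabla J X Y) Z"
  by (simp add: nablaPhi_def fundPhi_def nablaJ_def nabla_metric)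

definition qK_defect :: "'x \<Rightarrow> 'x \<Rightarrow> 'x" where
  "qK_defect X Y = nablaJ nabla J X Y - sc (of_real \<alpha>) (nablaJ nabla J (J X) (J Y))"

lemma qK_defect_add_left: "qK_defect (X1 + X2) Y = qK_defect X1 Y + qK_defect X2 Y"
  and qK_defect_add_right: "qK_defect X (Y1 + Y2) = qK_defect X Y1 + qK_defect X Y2"
  by (simp_all add: qK_defect_def scale_right_distrib algebra_simps)

lemma qK_defect_J_left: "qK_defect (J X) Y = J (qK_defect X Y)"
  and qK_defect_J_right: "qK_defect X (J Y) = - J (qK_defect X Y)"
  by (simp_all add: qK_defect_def scale_right_diff_distrib)

lemma qK_defect_eq_0_if_symmetric:
  assumes "\<And>X Y. qK_defect X Y = qK_defect Y X"
  shows "qK_defect X Y = 0"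
proof -
  have "J (qK_defect X Y) = - J (qK_defect X Y)"
    using assms[of "J X" Y] by (simp add: qK_defect_J_left qK_defect_J_right assms[of Y X])
  then have "J (qK_defect X Y + qK_defect X Y) = 0"
    by (simp add: eq_neg_iff_add_eq_0)
  then show ?thesis by simp
qed

lemma qK_defect_symmetric_if_skew:
  assumes "\<And>X Y. qK_defect X Y = - qK_defect Y X"
  shows "qK_defect X Y = qK_defect Y X"
proof -
  have "J (qK_defect X Y) = J (qK_defect Y X)"
    using assms[of "J X" Y] by (simp add: qK_defect_J_left qK_defect_J_right)
  then show ?thesis by simp
qed

text \<open>Polarization: an additive D vanishing on the diagonal is skew-symmetric.\<close>
lemma qK_defect_eq_0_if_diagonal_eq_0:
  assumes "\<And>X. qK_defect X X = 0"
  shows "qK_defect X Y = 0"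
proof -
  have "qK_defect U V = - qK_defect V U" for U V
    using assms[of "U + V"] assms[of U] assms[of V]
    by (simp add: qK_defect_add_left qK_defect_add_right eq_neg_iff_add_eq_0 algebra_simps)
  then show ?thesis
    by (blast intro: qK_defect_eq_0_if_symmetric qK_defect_symmetric_if_skew)
qed

lemma quasi_Kaehler_term_eq: "nablaJ nabla J X (J Y) - nablaJ nabla J (J X) Y = - J (qK_defect X Y)"
  by (simp add: qK_defect_J_right[symmetric]) (simp add: qK_defect_def)

lemma second_nijenhuis_eq:
  assumes "\<alpha> * \<epsilon> = -1"
  shows "second_nijenhuis sc nabla J \<alpha> \<epsilon> X Y = J (qK_defect Y X - qK_defect X Y)"
proof -
  have "second_nijenhuis sc nabla J \<alpha> \<epsilon> X Y
      = (nablaJ nabla J X (J Y) - nablaJ nabla J (J X) Y)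
        - (nablaJ nabla J Y (J X) - nablaJ nabla J (J Y) X)"
    unfolding second_nijenhuis_def using assms by (simp add: algebra_simps)
  then show ?thesis
    by (simp only: quasi_Kaehler_term_eq) simp
qed

lemma second_nijenhuis_eq_0_iff:
  assumes "\<alpha> * \<epsilon> = -1"
  shows "(\<forall>X Y. second_nijenhuis sc nabla J \<alpha> \<epsilon> X Y = 0) \<longleftrightarrow> (\<forall>X Y. qK_defect X Y = 0)"
proof
  assume "\<forall>X Y. second_nijenhuis sc nabla J \<alpha> \<epsilon> X Y = 0"
  then have "qK_defect X Y = qK_defect Y X" for X Y
    using second_nijenhuis_eq[OF assms, of Y X] by simp
  then show "\<forall>X Y. qK_defect X Y = 0"
    using qK_defect_eq_0_if_symmetric by blast
qed (simp add: second_nijenhuis_eq[OF assms])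

lemma nablaPhi_condition_eq_0_iff:
  "(\<forall>X Y Z. nablaPhi der nabla g J X Y Z - of_real \<alpha> * nablaPhi der nabla g J (J X) (J Y) Z = 0)
   \<longleftrightarrow> (\<forall>X Y. qK_defect X Y = 0)"
proof -
  have "nablaPhi der nabla g J X Y Z - of_real \<alpha> * nablaPhi der nabla g J (J X) (J Y) Z
      = g (qK_defect X Y) Z" for X Y Z
    by (simp add: nablaPhi_eq qK_defect_def)
  then show ?thesis by (simp add: g_eq_0_iff)
qed

end

theorem mainTheorem7:
  fixes sc :: "'f::{comm_ring_1,real_algebra_1} \<Rightarrow> 'x::ab_group_add \<Rightarrow> 'x"
    and der :: "'x \<Rightarrow> 'f \<Rightarrow> 'f" and br :: "'x \<Rightarrow> 'x \<Rightarrow> 'x"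
    and g :: "'x \<Rightarrow> 'x \<Rightarrow> 'f" and J :: "'x \<Rightarrow> 'x" and nabla :: "'x \<Rightarrow> 'x \<Rightarrow> 'x"
    and \<alpha> \<epsilon> :: real
  assumes "Jpm_metric_manifold sc der br g J \<alpha> \<epsilon>"
    and "levi_civita sc der br g nabla"
    and "\<alpha> * \<epsilon> = -1"
  shows "((\<forall>X Y. second_nijenhuis sc nabla J \<alpha> \<epsilon> X Y = 0)
          \<longleftrightarrow> (\<forall>X Y Z. nablaPhi der nabla g J X Y Z
                         - of_real \<alpha> * nablaPhi der nabla g J (J X) (J Y) Z = 0))
       \<and> ((\<forall>X Y Z. nablaPhi der nabla g J X Y Z
                         - of_real \<alpha> * nablaPhi der nabla g J (J X) (J Y) Z = 0)
          \<longleftrightarrow> (\<forall>X Y. nablaJ nabla J X Y - sc (of_real \<alpha>) (nablaJ nabla J (J X) (J Y)) = 0))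
       \<and> ((\<forall>X Y. nablaJ nabla J X Y - sc (of_real \<alpha>) (nablaJ nabla J (J X) (J Y)) = 0)
          \<longleftrightarrow> (\<forall>X Y. nablaJ nabla J X (J Y) - nablaJ nabla J (J X) Y = 0))
       \<and> ((\<forall>X Y. nablaJ nabla J X (J Y) - nablaJ nabla J (J X) Y = 0)
          \<longleftrightarrow> (\<forall>X. nablaJ nabla J X X - sc (of_real \<alpha>) (nablaJ nabla J (J X) (J X)) = 0))"
proof -
  interpret Jpm_levi_civita sc der br g J nabla \<alpha> \<epsilon>
    using assms(1,2) by unfold_locales
  have diagonal: "(\<forall>X. qK_defect X X = 0) \<longleftrightarrow> (\<forall>X Y. qK_defect X Y = 0)"
    using qK_defect_eq_0_if_diagonal_eq_0 by blast
  show ?thesis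
    using second_nijenhuis_eq_0_iff[OF assms(3)] nablaPhi_condition_eq_0_iff diagonal
    unfolding quasi_Kaehler_term_eq neg_equal_0_iff_equal J_eq_0_iff
    by (simp add: qK_defect_def)
qed

end
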